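(* Let $\theta\in\mathrm{Mat}_{r\times r}(\bar k[[\sigma]])$, $a\in\mathrm{Mat}_{r\times r}(\bar k)$, $e\in\mathrm{Mat}_{r\times s}(\bar k)$, $b\in\mathrm{Mat}_{s\times s}(\bar k)$ satisfy $\partial\theta=a$, $(a-T\mathbf 1_r)^r=0$, $ae=eb$, $(b-T\mathbf 1_s)^s=0$. Then there exists a unique $E\in\mathrm{Mat}_{r\times s}(\bar k[[\sigma]])$ with $\theta E=Eb$ and $\partial E=e$.
   Context: $\bar k$ is the algebraic closure of $k=\mathbb F_q(T)$. $\bar k[[\sigma]]$ is the ring of formal series $\sum_{i\ge0}a_i\sigma^i$ ($a_i\in\bar k$) with multiplication $(\sum_ia_i\sigma^i)(\sum_jb_j\sigma^j)=\sum_{i,j}a_ib_j^{q^{-i}}\sigma^{i+j}$ (the completion of the skew polynomial ring with $\sigma x=x^{q^{-1}}\sigma$). For a matrix $\phi=\sum_i a_{(i)}\sigma^i$ with $a_{(i)}$ matrices over $\bar k$, $\partial\phi:=a_{(0)}$. $\mathbf 1_n$ is the identity matrix. *)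

theory Defs
  imports "HOL-Computational_Algebra.Polynomial" "Jordan_Normal_Form.Matrix"
begin

text \<open>The field 'k (an alg_closed_field) together with T and q is required to be the
algebraic closure of k = F_q(T): 'k has prime characteristic p, q = p^m with m > 0,
T is transcendental over the prime field F_p, and every element of 'k is algebraic
over F_p(T) (equivalently over F_q(T)).  Such a field is isomorphic to the algebraic
closure of F_q(T), with T corresponding to the variable.\<close>

definition Fp_T_elems :: "'k::field \<Rightarrow> 'k set" where
  "Fp_T_elems T = {poly g T | g. \<forall>j. coeff g j \<in> range of_nat}"

definition is_alg_closure_FqT :: "nat \<Rightarrow> 'k::alg_closed_field \<Rightarrow> bool" where
  "is_alg_closure_FqT q T \<longleftrightarrow>
     prime CHAR('k) \<and> (\<exists>m>0. q = CHAR('k) ^ m) \<and>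
     (\<forall>g::'k poly. (\<forall>j. coeff g j \<in> range of_nat) \<and> poly g T = 0 \<longrightarrow> g = 0) \<and>
     (\<forall>x::'k. \<exists>f::'k poly. f \<noteq> 0 \<and> (\<forall>i. coeff f i \<in> Fp_T_elems T) \<and> poly f x = 0)"

definition qroot :: "nat \<Rightarrow> nat \<Rightarrow> 'k::field \<Rightarrow> 'k" where
  "qroot q l x = (THE y. y ^ (q ^ l) = x)"

text \<open>A matrix over the skew power series ring kbar[[sigma]] is represented by its
sequence of coefficient matrices: phi = sum_n (phi n) sigma^n.
Product of an (r x t) and a (t x s) such matrix, using sigma x = x^(q^-1) sigma:
(sum_i a_i sigma^i)(sum_j b_j sigma^j) = sum_{i,j} a_i b_j^(q^-i) sigma^(i+j).\<close>
definition skew_mult :: "nat \<Rightarrow> nat \<Rightarrow> nat \<Rightarrow> nat \<Rightarrow> (nat \<Rightarrow> 'k::field mat) \<Rightarrow> (nat \<Rightarrow> 'k mat) \<Rightarrow> (nat \<Rightarrow> 'k mat)" where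
  "skew_mult q r t s \<theta> E = (\<lambda>n. mat r s (\<lambda>(i,j).
      \<Sum>l\<le>n. \<Sum>k<t. \<theta> l $$ (i,k) * qroot q l (E (n - l) $$ (k,j))))"

definition const_series :: "nat \<Rightarrow> nat \<Rightarrow> 'k::field mat \<Rightarrow> (nat \<Rightarrow> 'k mat)" where
  "const_series r s b = (\<lambda>n. if n = 0 then b else 0\<^sub>m r s)"

definition skew_partial :: "(nat \<Rightarrow> 'k mat) \<Rightarrow> 'k mat" where
  "skew_partial \<phi> = \<phi> 0"

end

theory Submission
  imports Defs "HOL-Computational_Algebra.Primes" "Jordan_Normal_Form.Char_Poly"
begin

text \<open>
  Write x^(l) for the q^l-th root of x, taken entrywise on matrices. Comparing coefficients of
  \<sigma>^n, the equation \<theta>E = Eb says a E_n + (\<Sum>l=1..n. \<theta>_l E_{n-l}^(l)) = E_n b^(n).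
  For n = 0 this is a e = e b. For n > 0 it is a Sylvester equation for E_n, uniquely solvable
  because a has the single eigenvalue T while b^(n) has the single eigenvalue T^(n) \<noteq> T,
  T being transcendental over F_p. So each coefficient is determined by the earlier ones.
\<close>

lemma prime_CHAR_power_eq_imp_eq:
  fixes x y :: "'a::idom"
  assumes "prime CHAR('a)" and "x ^ (CHAR('a) ^ j) = y ^ (CHAR('a) ^ j)"
  shows "x = y"
proof -
  have "((x - y) + y) ^ (CHAR('a) ^ j) = (x - y) ^ (CHAR('a) ^ j) + y ^ (CHAR('a) ^ j)"
    using freshmans_dream' assms(1) by blast
  then show ?thesis using assms(2) by simp
qed

lemma qroot_index_0: "qroot q 0 x = x"
  unfolding qroot_def by simp

lemma qroot_zero: "0 < q \<Longrightarrow> qroot q l (0::'a::field) = 0"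
  unfolding qroot_def by (rule the_equality) simp_all

lemma qroot_eqI:
  fixes x y :: "'a::field"
  assumes "prime CHAR('a)" and "q = CHAR('a) ^ m" and "y ^ (q ^ l) = x"
  shows "qroot q l x = y"
  unfolding qroot_def
proof (rule the_equality)
  show "\<And>z. z ^ (q ^ l) = x \<Longrightarrow> z = y"
    using assms prime_CHAR_power_eq_imp_eq[of _ "m * l"] by (metis power_mult)
qed (rule assms(3))

lemma qroot_power:
  assumes "prime CHAR('k)" and "q = CHAR('k) ^ m"
  shows "qroot q l (x::'k::alg_closed_field) ^ (q ^ l) = x"
proof -
  have "q ^ l > 0" using assms prime_gt_0_nat by simp
  then obtain y where "y ^ (q ^ l) = x" using nth_root_exists by blast
  with qroot_eqI[OF assms this] show ?thesis by simp
qed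

lemma comm_ring_hom_qroot:
  assumes "prime CHAR('k)" and "q = CHAR('k) ^ m"
  shows "comm_ring_hom (qroot q l :: 'k::alg_closed_field \<Rightarrow> 'k)"
proof
  have "q ^ l = CHAR('k) ^ (m * l)" by (simp add: assms(2) power_mult)
  note root = qroot_power[OF assms] and eqI = qroot_eqI[OF assms]
  show "qroot q l 0 = (0::'k)" using assms prime_gt_0_nat by (simp add: qroot_zero)
  show "qroot q l 1 = (1::'k)" by (rule eqI) simp
  fix x y :: 'k
  show "qroot q l (x * y) = qroot q l x * qroot q l y"
    by (rule eqI) (simp add: power_mult_distrib root)
  show "qroot q l (x + y) = qroot q l x + qroot q l y"
    by (rule eqI) (simp add: freshmans_dream'[OF assms(1) \<open>q ^ l = _\<close>] root)
qed

lemma power_ne_self_if_transcendental: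
  fixes T :: "'a::idom"
  assumes "CHAR('a) > 0"
    and transc: "\<forall>g::'a poly. (\<forall>j. coeff g j \<in> range of_nat) \<and> poly g T = 0 \<longrightarrow> g = 0"
    and "N \<noteq> 1"
  shows "T ^ N \<noteq> T"
proof
  assume "T ^ N = T"
  define g :: "'a poly" where "g = monom 1 N - monom 1 1"
  have "(-1::'a) = of_nat (CHAR('a) - 1)"
    using assms(1) by (simp add: of_nat_diff)
  then have "coeff g j \<in> range of_nat" for j
    using \<open>N \<noteq> 1\<close> unfolding g_def coeff_diff coeff_monom
    by (auto intro: range_eqI[of _ _ 1] range_eqI[of _ _ 0] range_eqI[of _ _ "CHAR('a) - 1"]
             simp del: of_nat_diff)
  moreover have "poly g T = 0"
    unfolding g_def using \<open>T ^ N = T\<close> by (simp add: poly_monom)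
  ultimately have "g = 0" using transc by blast
  moreover have "coeff g N = 1"
    unfolding g_def using \<open>N \<noteq> 1\<close> by simp
  ultimately show False by simp
qed

lemma qroot_ne_self_if_transcendental:
  fixes T :: "'k::alg_closed_field"
  assumes "prime CHAR('k)" and "q = CHAR('k) ^ m" and "m > 0"
    and "\<forall>g::'k poly. (\<forall>j. coeff g j \<in> range of_nat) \<and> poly g T = 0 \<longrightarrow> g = 0"
    and "n > 0"
  shows "qroot q n T \<noteq> T"
proof
  assume "qroot q n T = T"
  then have "T ^ (q ^ n) = T" using qroot_power[OF assms(1,2), of n T] by simp
  moreover have "q > 1"
    using assms(2,3) prime_gt_1_nat[OF assms(1)] by (simp add: one_less_power del: One_nat_def)
  then have "q ^ n \<noteq> 1" using assms(5) by simp
  ultimately show False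
    using power_ne_self_if_transcendental[OF _ assms(4)] prime_gt_0_nat[OF assms(1)] by blast
qed

lemma is_alg_closure_FqT_qroot:
  fixes T :: "'k::alg_closed_field"
  assumes "is_alg_closure_FqT q T"
  shows "0 < q" and "comm_ring_hom (qroot q l :: 'k \<Rightarrow> 'k)" and "0 < n \<Longrightarrow> qroot q n T \<noteq> T"
proof -
  obtain m where p: "prime CHAR('k)" "q = CHAR('k) ^ m" "m > 0"
    and transc: "\<forall>g::'k poly. (\<forall>j. coeff g j \<in> range of_nat) \<and> poly g T = 0 \<longrightarrow> g = 0"
    using assms unfolding is_alg_closure_FqT_def by (elim conjE exE) simp
  show "0 < q" using p prime_gt_0_nat by simp
  show "comm_ring_hom (qroot q l :: 'k \<Rightarrow> 'k)" by (rule comm_ring_hom_qroot[OF p(1,2)])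
  show "0 < n \<Longrightarrow> qroot q n T \<noteq> T" by (rule qroot_ne_self_if_transcendental[OF p transc])
qed

lemma pow_mat_Suc_left: "A \<in> carrier_mat n n \<Longrightarrow> A ^\<^sub>m Suc k = A * A ^\<^sub>m k"
proof (induction k)
  case (Suc k)
  then show ?case
    using assoc_mult_mat[OF Suc.prems pow_carrier_mat[OF Suc.prems] Suc.prems] by simp
qed simp

lemma (in comm_ring_hom) map_mat_shift_pow_eq_0:
  assumes B: "B \<in> carrier_mat n n" and nil: "(B - t \<cdot>\<^sub>m 1\<^sub>m n) ^\<^sub>m k = 0\<^sub>m n n"
  shows "(map_mat hom B - hom t \<cdot>\<^sub>m 1\<^sub>m n) ^\<^sub>m k = 0\<^sub>m n n"
proof -
  have "map_mat hom B - hom t \<cdot>\<^sub>m 1\<^sub>m n = map_mat hom (B - t \<cdot>\<^sub>m 1\<^sub>m n)"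
    using B by (auto intro!: eq_matI simp: hom_minus)
  also have "\<dots> ^\<^sub>m k = map_mat hom ((B - t \<cdot>\<^sub>m 1\<^sub>m n) ^\<^sub>m k)"
    using B by (intro mat_hom_pow[of _ n, symmetric]) (simp add: minus_carrier_mat)
  also have "\<dots> = 0\<^sub>m n n"
    unfolding nil by (auto intro!: eq_matI)
  finally show ?thesis .
qed

lemma char_matrix_eq_shift: "A \<in> carrier_mat n n \<Longrightarrow> char_matrix A t = A - t \<cdot>\<^sub>m 1\<^sub>m n"
  unfolding char_matrix_def by (auto intro!: eq_matI)

lemma eigenvalue_eq_if_shift_nilpotent:
  fixes A :: "'a::field mat"
  assumes A: "A \<in> carrier_mat n n" and nil: "(A - t \<cdot>\<^sub>m 1\<^sub>m n) ^\<^sub>m k = 0\<^sub>m n n"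
    and "eigenvalue A u"
  shows "u = t"
proof -
  obtain v where "eigenvector A v u" using \<open>eigenvalue A u\<close> unfolding eigenvalue_def by blast
  then have v: "v \<in> carrier_vec n" "v \<noteq> 0\<^sub>v n" "char_matrix A u *\<^sub>v v = 0\<^sub>v n"
    using eigenvector_char_matrix[OF A] by auto
  have "char_matrix (char_matrix A t) (u - t) = char_matrix A u"
    using A unfolding char_matrix_def by (auto intro!: eq_matI)
  then have "eigenvector (char_matrix A t) v (u - t)"
    using v eigenvector_char_matrix[OF char_matrix_closed[OF A]] by simp
  then have "char_matrix A t ^\<^sub>m k *\<^sub>v v = (u - t) ^ k \<cdot>\<^sub>v v"
    by (rule eigenvector_pow[OF char_matrix_closed[OF A]])
  moreover have "0\<^sub>m n n *\<^sub>v v = 0\<^sub>v n" using v(1) by (auto intro!: eq_vecI)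
  ultimately have "(u - t) ^ k \<cdot>\<^sub>v v = 0\<^sub>v n"
    using nil by (simp add: char_matrix_eq_shift[OF A])
  moreover obtain i where "i < n" "v $ i \<noteq> 0" using v(1,2) by (auto simp: vec_eq_iff)
  ultimately have "(u - t) ^ k = 0"
    by (metis index_smult_vec(1) index_zero_vec(1) carrier_vecD v(1) mult_eq_0_iff)
  then show "u = t" by simp
qed

text \<open>
  If \<open>C\<close> inverts \<open>A\<close>, then \<open>A X + Y = X N\<close> says that \<open>X\<close> is a fixed point of this affine
  map. Its linear part \<open>X \<mapsto> C X N\<close> has vanishing \<open>k\<close>-th iterate when \<open>N\<^sup>k = 0\<close>, so the
  \<open>k\<close>-th iterate of the map is constant, and that constant is the unique fixed point.
\<close>

definition sylvester_step :: "'a::comm_ring_1 mat \<Rightarrow> 'a mat \<Rightarrow> 'a mat \<Rightarrow> 'a mat \<Rightarrow> 'a mat" where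
  "sylvester_step C N Y X = C * (X * N - Y)"

lemma funpow_sylvester_step_carrier:
  assumes "C \<in> carrier_mat r r" and "Y \<in> carrier_mat r s" and "X \<in> carrier_mat r s"
  shows "(sylvester_step C N Y ^^ j) X \<in> carrier_mat r s"
  using assms by (induction j) (auto simp: sylvester_step_def minus_carrier_mat)

lemma funpow_sylvester_step:
  assumes C: "C \<in> carrier_mat r r" and N: "N \<in> carrier_mat s s" and Y: "Y \<in> carrier_mat r s"
    and X: "X \<in> carrier_mat r s"
  shows "(sylvester_step C N Y ^^ j) X
    = (sylvester_step C N Y ^^ j) (0\<^sub>m r s) + C ^\<^sub>m j * X * N ^\<^sub>m j"
proof (induction j)
  case 0
  show ?case using X C N by simp
next
  case (Suc j)
  let ?F = "sylvester_step C N Y"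
  define P where "P = (?F ^^ j) (0\<^sub>m r s)"
  define Q where "Q = C ^\<^sub>m j * X * N ^\<^sub>m j"
  have P: "P \<in> carrier_mat r s" unfolding P_def using C Y by (simp add: funpow_sylvester_step_carrier)
  have Cj: "C ^\<^sub>m j \<in> carrier_mat r r" and Nj: "N ^\<^sub>m j \<in> carrier_mat s s" using C N by simp_all
  have CjX: "C ^\<^sub>m j * X \<in> carrier_mat r s" using Cj X by simp
  have Q: "Q \<in> carrier_mat r s" unfolding Q_def using CjX Nj by simp
  have "(?F ^^ Suc j) X = ?F (P + Q)"
    using Suc.IH by (simp add: P_def Q_def)
  also have "\<dots> = C * ((P + Q) * N - Y)"
    by (rule sylvester_step_def)
  also have "(P + Q) * N - Y = (P * N - Y) + Q * N"
    using P Q N Y by (auto simp: mat_eq_iff add_mult_distrib_mat)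
  also have "C * \<dots> = ?F P + C * (Q * N)"
    unfolding sylvester_step_def using P Q N Y
    by (intro mult_add_distrib_mat[OF C]) (auto simp: minus_carrier_mat)
  also have "C * (Q * N) = C * (C ^\<^sub>m j * X) * N ^\<^sub>m j * N"
    using assoc_mult_mat[OF C Q N] assoc_mult_mat[OF C CjX Nj] by (simp add: Q_def)
  also have "\<dots> = C ^\<^sub>m Suc j * X * N ^\<^sub>m Suc j"
    using assoc_mult_mat[OF C Cj X] assoc_mult_mat[OF _ Nj N, of "C ^\<^sub>m Suc j * X" r]
      pow_mat_Suc_left[OF C] mult_carrier_mat[OF C CjX] by simp
  finally show ?case by (simp add: P_def)
qed

lemma sylvester_ex1_invertible_nilpotent:
  fixes A C N Y :: "'a::comm_ring_1 mat"
  assumes A: "A \<in> carrier_mat r r" and C: "C \<in> carrier_mat r r"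
    and CA: "C * A = 1\<^sub>m r" and AC: "A * C = 1\<^sub>m r"
    and N: "N \<in> carrier_mat s s" and nil: "N ^\<^sub>m k = 0\<^sub>m s s" and Y: "Y \<in> carrier_mat r s"
  shows "\<exists>!X. X \<in> carrier_mat r s \<and> A * X + Y = X * N"
proof -
  let ?F = "sylvester_step C N Y"
  have fixpoint_iff: "?F X = X \<longleftrightarrow> A * X + Y = X * N" if X: "X \<in> carrier_mat r s" for X
  proof -
    have XN_Y: "X * N - Y \<in> carrier_mat r s" using Y by (simp add: minus_carrier_mat)
    have "?F X = X \<longleftrightarrow> A * X = X * N - Y"
    proof
      assume "?F X = X"
      then have "A * X = (A * C) * (X * N - Y)"
        unfolding sylvester_step_def using assoc_mult_mat[OF A C XN_Y] by simp
      then show "A * X = X * N - Y" using AC left_mult_one_mat[OF XN_Y] by simp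
    next
      assume "A * X = X * N - Y"
      then have "?F X = (C * A) * X"
        unfolding sylvester_step_def using assoc_mult_mat[OF C A X] by simp
      then show "?F X = X" using CA X by simp
    qed
    also have "\<dots> \<longleftrightarrow> A * X + Y = X * N"
      using A X N Y by (auto simp: mat_eq_iff eq_diff_eq)
    finally show ?thesis .
  qed
  define X\<^sub>0 where "X\<^sub>0 = (?F ^^ k) (0\<^sub>m r s)"
  have X\<^sub>0: "X\<^sub>0 \<in> carrier_mat r s"
    unfolding X\<^sub>0_def using C Y by (simp add: funpow_sylvester_step_carrier)
  have iterate_k: "(?F ^^ k) X = X\<^sub>0" if "X \<in> carrier_mat r s" for X
    using funpow_sylvester_step[OF C N Y that, of k] nil X\<^sub>0
      right_mult_zero_mat[OF mult_carrier_mat[OF pow_carrier_mat[OF C] that]]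
    by (simp add: X\<^sub>0_def)
  show ?thesis
  proof
    have "?F X\<^sub>0 = (?F ^^ k) (?F (0\<^sub>m r s))"
      unfolding X\<^sub>0_def by (rule funpow_swap1)
    also have "\<dots> = X\<^sub>0"
      using funpow_sylvester_step_carrier[OF C Y, of "0\<^sub>m r s" 1] by (intro iterate_k) simp
    finally have "?F X\<^sub>0 = X\<^sub>0" .
    then show "X\<^sub>0 \<in> carrier_mat r s \<and> A * X\<^sub>0 + Y = X\<^sub>0 * N"
      using fixpoint_iff X\<^sub>0 by simp
  next
    fix X assume "X \<in> carrier_mat r s \<and> A * X + Y = X * N"
    then have "X \<in> carrier_mat r s" "?F X = X" using fixpoint_iff by auto
    moreover from \<open>?F X = X\<close> have "(?F ^^ k) X = X" by (induction k) simp_all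
    ultimately show "X = X\<^sub>0" using iterate_k by simp
  qed
qed

lemma sylvester_ex1_single_eigenvalue:
  fixes A B Y :: "'a::field mat"
  assumes A: "A \<in> carrier_mat r r" and B: "B \<in> carrier_mat s s" and Y: "Y \<in> carrier_mat r s"
    and "\<not> eigenvalue A u" and nil: "(B - u \<cdot>\<^sub>m 1\<^sub>m s) ^\<^sub>m k = 0\<^sub>m s s"
  shows "\<exists>!X. X \<in> carrier_mat r s \<and> A * X + Y = X * B"
proof -
  define A' where "A' = A - u \<cdot>\<^sub>m 1\<^sub>m r"
  define N where "N = B - u \<cdot>\<^sub>m 1\<^sub>m s"
  have A': "A' \<in> carrier_mat r r" and N: "N \<in> carrier_mat s s"
    unfolding A'_def N_def by (simp_all add: minus_carrier_mat)
  have "det A' \<noteq> 0"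
    using \<open>\<not> eigenvalue A u\<close> eigenvalue_det[OF A] char_matrix_eq_shift[OF A] by (simp add: A'_def)
  then obtain C where C: "C \<in> carrier_mat r r" "C * A' = 1\<^sub>m r" "A' * C = 1\<^sub>m r"
    using det_non_zero_imp_unit[OF A', of "()"] unfolding Units_def ring_mat_simps by auto
  have "A * X + Y = X * B \<longleftrightarrow> A' * X + Y = X * N" if X: "X \<in> carrier_mat r s" for X
  proof -
    have "A' * X = A * X - u \<cdot>\<^sub>m X"
      unfolding A'_def using A X
      by (simp add: minus_mult_distrib_mat[of _ r r] mult_smult_assoc_mat[of _ r r])
    moreover have "X * N = X * B - u \<cdot>\<^sub>m X"
      unfolding N_def using B X
      by (simp add: mult_minus_distrib_mat[of _ r s] mult_smult_distrib[OF X one_carrier_mat])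
    ultimately show ?thesis
      using A B X Y by (auto simp: mat_eq_iff)
  qed
  then have "(\<lambda>X. X \<in> carrier_mat r s \<and> A * X + Y = X * B)
      = (\<lambda>X. X \<in> carrier_mat r s \<and> A' * X + Y = X * N)"
    by blast
  with sylvester_ex1_invertible_nilpotent[OF A' C N nil[folded N_def] Y] show ?thesis
    by simp
qed

lemma sylvester_ex1_qroot:
  fixes T :: "'k::alg_closed_field"
  assumes "is_alg_closure_FqT q T" and "0 < n"
    and a: "a \<in> carrier_mat r r" and b: "b \<in> carrier_mat s s" and "Y \<in> carrier_mat r s"
    and "(a - T \<cdot>\<^sub>m 1\<^sub>m r) ^\<^sub>m k = 0\<^sub>m r r"
    and "(b - T \<cdot>\<^sub>m 1\<^sub>m s) ^\<^sub>m k' = 0\<^sub>m s s"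
  shows "\<exists>!X. X \<in> carrier_mat r s \<and> a * X + Y = X * map_mat (qroot q n) b"
proof (rule sylvester_ex1_single_eigenvalue)
  show "\<not> eigenvalue a (qroot q n T)"
    using eigenvalue_eq_if_shift_nilpotent[OF a assms(6)]
      is_alg_closure_FqT_qroot(3)[OF assms(1,2)] by blast
  interpret comm_ring_hom "qroot q n :: 'k \<Rightarrow> 'k"
    by (rule is_alg_closure_FqT_qroot(2)[OF assms(1)])
  show "(map_mat (qroot q n) b - qroot q n T \<cdot>\<^sub>m 1\<^sub>m s) ^\<^sub>m k' = 0\<^sub>m s s"
    by (rule map_mat_shift_pow_eq_0[OF b assms(7)])
qed (use assms in simp_all)

definition skew_mult_tail ::
  "nat \<Rightarrow> nat \<Rightarrow> nat \<Rightarrow> nat \<Rightarrow> (nat \<Rightarrow> 'k::field mat) \<Rightarrow> (nat \<Rightarrow> 'k mat) \<Rightarrow> nat \<Rightarrow> 'k mat"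
  where "skew_mult_tail q r t s \<theta> E n = mat r s (\<lambda>(i,j).
      \<Sum>l\<in>{1..n}. \<Sum>k<t. \<theta> l $$ (i,k) * qroot q l (E (n - l) $$ (k,j)))"

lemma skew_mult_tail_carrier[simp]: "skew_mult_tail q r t s \<theta> E n \<in> carrier_mat r s"
  unfolding skew_mult_tail_def by simp

lemma skew_mult_tail_0: "skew_mult_tail q r t s \<theta> E 0 = 0\<^sub>m r s"
  unfolding skew_mult_tail_def by (auto intro!: eq_matI)

lemma skew_mult_tail_cong:
  "(\<And>m. m < n \<Longrightarrow> E m = E' m) \<Longrightarrow>
    skew_mult_tail q r t s \<theta> E n = skew_mult_tail q r t s \<theta> E' n"
  unfolding skew_mult_tail_def by (intro cong_mat refl sum.cong) auto

lemma skew_mult_eq_head_plus_tail: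
  assumes "\<theta> 0 \<in> carrier_mat r t" and "E n \<in> carrier_mat t s"
  shows "skew_mult q r t s \<theta> E n = \<theta> 0 * E n + skew_mult_tail q r t s \<theta> E n"
proof (rule eq_matI)
  fix i j assume "i < dim_row (\<theta> 0 * E n + skew_mult_tail q r t s \<theta> E n)"
    and "j < dim_col (\<theta> 0 * E n + skew_mult_tail q r t s \<theta> E n)"
  then have ij: "i < r" "j < s" by (auto simp: skew_mult_tail_def)
  let ?f = "\<lambda>l. \<Sum>k<t. \<theta> l $$ (i,k) * qroot q l (E (n - l) $$ (k,j))"
  have "{..n} = insert 0 {1..n}" by auto
  then have "(\<Sum>l\<le>n. ?f l) = ?f 0 + (\<Sum>l\<in>{1..n}. ?f l)" by simp
  moreover have "?f 0 = (\<theta> 0 * E n) $$ (i,j)"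
    using assms ij by (simp add: qroot_index_0 scalar_prod_def lessThan_atLeast0)
  ultimately show "skew_mult q r t s \<theta> E n $$ (i, j)
      = (\<theta> 0 * E n + skew_mult_tail q r t s \<theta> E n) $$ (i, j)"
    using ij assms by (simp add: skew_mult_def skew_mult_tail_def)
qed (use assms in \<open>auto simp: skew_mult_def skew_mult_tail_def\<close>)

lemma skew_mult_const_series:
  assumes "0 < q" and "E n \<in> carrier_mat r t" and "b \<in> carrier_mat t s"
  shows "skew_mult q r t s E (const_series t s b) n = E n * map_mat (qroot q n) b"
proof (rule eq_matI)
  fix i j assume "i < dim_row (E n * map_mat (qroot q n) b)"
    and "j < dim_col (E n * map_mat (qroot q n) b)"
  then have ij: "i < r" "j < s" using assms by auto
  let ?f = "\<lambda>l. \<Sum>k<t. E l $$ (i,k) * qroot q l (const_series t s b (n - l) $$ (k,j))"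
  have "(\<Sum>l\<le>n. ?f l) = ?f n + (\<Sum>l<n. ?f l)"
    by (simp add: lessThan_Suc_atMost[symmetric])
  moreover have "(\<Sum>l<n. ?f l) = 0"
    using ij \<open>0 < q\<close> by (intro sum.neutral) (auto simp: const_series_def qroot_zero)
  moreover have "?f n = (E n * map_mat (qroot q n) b) $$ (i,j)"
    using assms ij by (simp add: const_series_def scalar_prod_def lessThan_atLeast0)
  ultimately show "skew_mult q r t s E (const_series t s b) n $$ (i, j)
      = (E n * map_mat (qroot q n) b) $$ (i, j)"
    using ij by (simp add: skew_mult_def)
qed (use assms in \<open>auto simp: skew_mult_def\<close>)

lemma skew_mult_eq_const_series_iff:
  assumes "0 < q" and "\<theta> 0 = a" and "a \<in> carrier_mat r r" and "E n \<in> carrier_mat r s"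
    and "b \<in> carrier_mat s s"
  shows "skew_mult q r r s \<theta> E n = skew_mult q r s s E (const_series s s b) n
    \<longleftrightarrow> a * E n + skew_mult_tail q r r s \<theta> E n = E n * map_mat (qroot q n) b"
  using assms by (simp add: skew_mult_eq_head_plus_tail skew_mult_const_series)

lemma ex1_dependent_wellorder_choice:
  fixes P :: "('a::wellorder \<Rightarrow> 'b) \<Rightarrow> 'a \<Rightarrow> 'b \<Rightarrow> bool"
  assumes adm: "\<And>r f g x. (\<And>y. y < x \<Longrightarrow> f y = g y) \<Longrightarrow> P f x r = P g x r"
    and P: "\<And>x f. \<exists>!r. P f x r"
  shows "\<exists>!f. \<forall>x. P f x (f x)"
proof (rule ex_ex1I)
  show "\<exists>f. \<forall>x. P f x (f x)"
    using P by (intro dependent_wellorder_choice[OF adm]) blast+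
next
  fix f g assume f: "\<forall>x. P f x (f x)" and g: "\<forall>x. P g x (g x)"
  have "f x = g x" for x
  proof (induction x rule: less_induct)
    case (less x)
    then have "P f x (g x)" using adm[of x f g "g x"] g by simp
    then show ?case using f P by blast
  qed
  then show "f = g" ..
qed

theorem lemma4:
  fixes T :: "'k::alg_closed_field" and q r s :: nat
    and \<theta> :: "nat \<Rightarrow> 'k mat" and a e b :: "'k mat"
  assumes "is_alg_closure_FqT q T"
    and "\<forall>i. \<theta> i \<in> carrier_mat r r"
    and "a \<in> carrier_mat r r" and "e \<in> carrier_mat r s" and "b \<in> carrier_mat s s"
    and "skew_partial \<theta> = a"
    and "(a - T \<cdot>\<^sub>m 1\<^sub>m r) ^\<^sub>m r = 0\<^sub>m r r"
    and "a * e = e * b"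
    and "(b - T \<cdot>\<^sub>m 1\<^sub>m s) ^\<^sub>m s = 0\<^sub>m s s"
  shows "\<exists>!E. (\<forall>i. E i \<in> carrier_mat r s)
              \<and> skew_mult q r r s \<theta> E = skew_mult q r s s E (const_series s s b)
              \<and> skew_partial E = e"
proof -
  have "0 < q" by (rule is_alg_closure_FqT_qroot(1)[OF assms(1)])
  have \<theta>0: "\<theta> 0 = a" using assms(6) unfolding skew_partial_def .
  define P where "P E n X \<longleftrightarrow> X \<in> carrier_mat r s \<and> (n = 0 \<longrightarrow> X = e)
      \<and> a * X + skew_mult_tail q r r s \<theta> E n = X * map_mat (qroot q n) b" for E n X
  have "(\<forall>i. E i \<in> carrier_mat r s)
      \<and> skew_mult q r r s \<theta> E = skew_mult q r s s E (const_series s s b)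
      \<and> skew_partial E = e \<longleftrightarrow> (\<forall>n. P E n (E n))" for E
    using skew_mult_eq_const_series_iff[where \<theta> = \<theta> and E = E,
        OF \<open>0 < q\<close> \<theta>0 assms(3) _ assms(5)]
    unfolding P_def skew_partial_def fun_eq_iff by blast
  moreover have "\<exists>!E. \<forall>n. P E n (E n)"
  proof (rule ex1_dependent_wellorder_choice)
    show "P E n X = P E' n X" if "\<And>m. m < n \<Longrightarrow> E m = E' m" for X E E' n
      unfolding P_def using skew_mult_tail_cong[OF that] by simp
    show "\<exists>!X. P E n X" for E n
    proof (cases "n = 0")
      case True
      moreover have "map_mat (qroot q 0) b = b"
        using assms(5) by (auto intro!: eq_matI simp: qroot_index_0)
      ultimately show ?thesis
        using assms(4,8) mult_carrier_mat[OF assms(3,4)] by (auto simp: P_def skew_mult_tail_0)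
    next
      case False
      then show ?thesis
        using sylvester_ex1_qroot[OF assms(1) _ assms(3,5) skew_mult_tail_carrier assms(7,9)]
        by (simp add: P_def)
    qed
  qed
  ultimately show ?thesis by simp
qed

end
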